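(* Let $\nu>0$, let $K$ be a smooth positive function with antiderivative $J(u)=\int K(u)\,du$ assumed invertible, and let $A\neq 0$, $B$, $D\neq 0$, $Q$ be constants. Suppose $C(u)=D\,K(u)\left(AJ(u)+B\right)^{1/A}$. Then, on any region of $z>0$, $t>0$ where $Q+\frac{2(2A+1-\nu)}{D}t>0$ and the argument below lies in the range of $J$, $$u(z,t)=J^{-1}\!\left(\frac{1}{A}z^{-2A}\left(Q+\frac{2(2A+1-\nu)}{D}t\right)^{A}-\frac{B}{A}\right)$$ is a solution of $C(u)u_t=z^{-\nu}\left(K(u)z^{\nu}u_z\right)_z$. *)

theory Defs
  imports "HOL-Analysis.Analysis"
begin

definition smooth_fun :: "(real \<Rightarrow> real) \<Rightarrow> bool" where
  "smooth_fun f \<longleftrightarrow> (\<forall>n x. ((deriv ^^ n) f) differentiable (at x))"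

end

theory Submission
  imports Defs
begin

text \<open>Write \<open>T = Q + c t\<close> with \<open>c = 2(2A + 1 - \<nu>)/D\<close>. The ansatz prescribes
  \<open>J(u) = (z^(-2A) T^A - B)/A\<close>, and since \<open>J' = K\<close> the chain rule gives
  \<open>K(u) u_t = c z^(-2A) T^(A-1)\<close> and \<open>K(u) u_z = -2 z^(-2A-1) T^A\<close>. Hence the flux
  \<open>K(u) z^\<nu> u_z = -2 T^A z^(\<nu>-2A-1)\<close> no longer involves \<open>K\<close>, and the right-hand side
  is \<open>-2(\<nu>-2A-1) z^(-2A-2) T^A\<close>. On the left, the choice of \<open>C\<close> makes
  \<open>(A J(u) + B)^(1/A) = T/z^2\<close>, so \<open>C(u) u_t = D c z^(-2A-2) T^A\<close>, and \<open>D c\<close> is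
  exactly \<open>-2(\<nu>-2A-1)\<close>.\<close>

definition similarity_level :: "real \<Rightarrow> real \<Rightarrow> real \<Rightarrow> real \<Rightarrow> real \<Rightarrow> real \<Rightarrow> real" where
  "similarity_level A B Q c z t = 1 / A * z powr (-2 * A) * (Q + c * t) powr A - B / A"

lemma similarity_level_has_derivative_time:
  assumes "A \<noteq> 0" and "Q + c * t > 0"
  shows "((\<lambda>s. similarity_level A B Q c z s) has_real_derivative
      c * z powr (-2 * A) * (Q + c * t) powr (A - 1)) (at t)"
proof -
  have "((\<lambda>s. similarity_level A B Q c z s) has_real_derivative
      1 / A * z powr (-2 * A) * (A * (Q + c * t) powr (A - 1) * c)) (at t)"
    unfolding similarity_level_def using assms(2) by (auto intro!: derivative_eq_intros)
  then show ?thesis using assms(1) by (simp add: field_simps)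
qed

lemma similarity_level_has_derivative_space:
  assumes "A \<noteq> 0" and "z > 0"
  shows "((\<lambda>y. similarity_level A B Q c y t) has_real_derivative
      -2 * (Q + c * t) powr A * z powr (-2 * A - 1)) (at z)"
proof -
  have "((\<lambda>y. similarity_level A B Q c y t) has_real_derivative
      1 / A * (-2 * A * z powr (-2 * A - 1)) * (Q + c * t) powr A) (at z)"
    unfolding similarity_level_def using assms(2) by (auto intro!: derivative_eq_intros)
  then show ?thesis using assms(1) by (simp add: field_simps)
qed

lemma similarity_level_powr:
  assumes "A \<noteq> 0" and "z > 0" and "Q + c * t > 0"
  shows "(A * similarity_level A B Q c z t + B) powr (1 / A) = z powr (-2) * (Q + c * t)"
proof -
  have "A * similarity_level A B Q c z t + B = z powr (-2 * A) * (Q + c * t) powr A"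
    using assms(1) by (simp add: similarity_level_def field_simps)
  then show ?thesis using assms by (simp add: powr_mult powr_powr)
qed

locale invertible_antiderivative =
  fixes J K :: "real \<Rightarrow> real"
  assumes J_deriv: "\<And>x. (J has_real_derivative K x) (at x)"
    and K_nonzero: "\<And>x. K x \<noteq> 0"
    and inj_J: "inj J"
begin

lemma inv_has_real_derivative:
  assumes "x \<in> range J"
  shows "(inv J has_real_derivative inverse (K (inv J x))) (at x)"
proof -
  obtain y where y: "x = J y" using assms by auto
  have "continuous_on UNIV J"
    using J_deriv by (meson DERIV_isCont continuous_at_imp_continuous_on)
  then have "(inv J has_derivative (*) (inverse (K y))) (at (J y))"
    using J_deriv[of y] K_nonzero[of y] inj_J
    by (intro has_derivative_inverse_strong[of UNIV y J "inv J" "(*) (K y)"])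
       (auto simp: has_field_derivative_def fun_eq_iff)
  then show ?thesis using y inj_J by (simp add: has_field_derivative_def)
qed

lemma inv_comp_has_real_derivative:
  assumes "(f has_real_derivative f') (at x)" and "f x \<in> range J"
  shows "((\<lambda>y. inv J (f y)) has_real_derivative f' / K (inv J (f x))) (at x)"
  using DERIV_chain2[OF inv_has_real_derivative[OF assms(2)] assms(1)]
  by (simp add: field_simps)

lemma similarity_flux_eq:
  assumes u_def: "\<And>z t. u z t = inv J (similarity_level A B Q c z t)"
    and "A \<noteq> 0" and "y > 0" and "similarity_level A B Q c y t \<in> range J"
  shows "((\<lambda>z. u z t) has_real_derivative
      -2 * (Q + c * t) powr A * y powr (-2 * A - 1) / K (u y t)) (at y)"
    and "K (u y t) * y powr \<nu> * deriv (\<lambda>z. u z t) y = -2 * (Q + c * t) powr A * y powr (\<nu> - 2 * A - 1)"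
proof -
  show uz: "((\<lambda>z. u z t) has_real_derivative
      -2 * (Q + c * t) powr A * y powr (-2 * A - 1) / K (u y t)) (at y)"
    unfolding u_def
    by (rule inv_comp_has_real_derivative[OF similarity_level_has_derivative_space assms(4)])
       (use assms in auto)
  have "y powr \<nu> * y powr (-2 * A - 1) = y powr (\<nu> - 2 * A - 1)"
    by (simp add: powr_add[symmetric] algebra_simps)
  then show "K (u y t) * y powr \<nu> * deriv (\<lambda>z. u z t) y = -2 * (Q + c * t) powr A * y powr (\<nu> - 2 * A - 1)"
    using DERIV_imp_deriv[OF uz] K_nonzero[of "u y t"] by (simp add: field_simps)
qed

lemma similarity_flux_has_derivative:
  assumes u_def: "\<And>z t. u z t = inv J (similarity_level A B Q c z t)"
    and "A \<noteq> 0" and "open N" and "z \<in> N"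
    and N_level: "\<And>y. y \<in> N \<Longrightarrow> y > 0 \<and> similarity_level A B Q c y t \<in> range J"
  shows "((\<lambda>y. K (u y t) * y powr \<nu> * deriv (\<lambda>y'. u y' t) y) has_real_derivative
      -2 * (Q + c * t) powr A * ((\<nu> - 2 * A - 1) * z powr (\<nu> - 2 * A - 2))) (at z)"
proof (rule has_field_derivative_transform_within_open[OF _ assms(3,4)])
  show "((\<lambda>y. -2 * (Q + c * t) powr A * y powr (\<nu> - 2 * A - 1)) has_real_derivative
      -2 * (Q + c * t) powr A * ((\<nu> - 2 * A - 1) * z powr (\<nu> - 2 * A - 2))) (at z)"
    using N_level[OF assms(4)] by (auto intro!: derivative_eq_intros simp: algebra_simps)
qed (use similarity_flux_eq(2)[OF u_def assms(2)] N_level in simp)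

lemma similarity_time_term:
  assumes u_def: "\<And>z t. u z t = inv J (similarity_level A B Q c z t)"
    and "A \<noteq> 0" and "z > 0" and "Q + c * t > 0"
    and "similarity_level A B Q c z t \<in> range J"
    and C_def: "\<And>x. C x = D * K x * (A * J x + B) powr (1 / A)"
  shows "((\<lambda>s. u z s) has_real_derivative
      c * z powr (-2 * A) * (Q + c * t) powr (A - 1) / K (u z t)) (at t)"
    and "C (u z t) * deriv (\<lambda>s. u z s) t = D * c * z powr (-2 * A - 2) * (Q + c * t) powr A"
proof -
  let ?T = "Q + c * t"
  show ut: "((\<lambda>s. u z s) has_real_derivative c * z powr (-2 * A) * ?T powr (A - 1) / K (u z t)) (at t)"
    unfolding u_def
    by (rule inv_comp_has_real_derivative[OF similarity_level_has_derivative_time assms(5)])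
       (use assms in auto)
  have "J (u z t) = similarity_level A B Q c z t"
    unfolding u_def by (rule f_inv_into_f[OF assms(5)])
  then have C_eq: "C (u z t) = D * K (u z t) * (z powr (-2) * ?T)"
    using C_def similarity_level_powr[OF assms(2-4)] by simp
  have K_ut: "K (u z t) * deriv (\<lambda>s. u z s) t = c * z powr (-2 * A) * ?T powr (A - 1)"
    using DERIV_imp_deriv[OF ut] K_nonzero[of "u z t"] by simp
  have "C (u z t) * deriv (\<lambda>s. u z s) t = D * (z powr (-2) * ?T) * (K (u z t) * deriv (\<lambda>s. u z s) t)"
    unfolding C_eq by (simp only: mult_ac)
  also have "\<dots> = D * c * (z powr (-2) * z powr (-2 * A)) * (?T * ?T powr (A - 1))"
    unfolding K_ut by (simp only: mult_ac)
  also have "\<dots> = D * c * z powr (-2 * A - 2) * ?T powr A"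
  proof -
    have "z powr (-2) * z powr (-2 * A) = z powr (-2 * A - 2)"
      by (subst powr_add[symmetric], rule arg_cong[where f="(powr) z"]) simp
    moreover have "?T * ?T powr (A - 1) = ?T powr A"
      using assms(4) by (simp add: powr_mult_base)
    ultimately show ?thesis by simp
  qed
  finally show "C (u z t) * deriv (\<lambda>s. u z s) t = D * c * z powr (-2 * A - 2) * ?T powr A" .
qed

lemma similarity_solution:
  assumes u_def: "\<And>z t. u z t = inv J (similarity_level A B Q c z t)"
    and "A \<noteq> 0" and C_def: "\<And>x. C x = D * K x * (A * J x + B) powr (1 / A)"
    and Dc: "D * c = 2 * (2 * A + 1 - \<nu>)" and "Q + c * t > 0"
    and "open N" and "z \<in> N"
    and N_level: "\<And>y. y \<in> N \<Longrightarrow> y > 0 \<and> similarity_level A B Q c y t \<in> range J"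
  shows "(\<lambda>s. u z s) differentiable (at t) \<and>
      (\<lambda>y. u y t) differentiable (at z) \<and>
      (\<lambda>y. K (u y t) * y powr \<nu> * deriv (\<lambda>y'. u y' t) y) differentiable (at z) \<and>
      C (u z t) * deriv (\<lambda>s. u z s) t =
        z powr (-\<nu>) * deriv (\<lambda>y. K (u y t) * y powr \<nu> * deriv (\<lambda>y'. u y' t) y) z"
proof -
  have "z > 0" and level: "similarity_level A B Q c z t \<in> range J"
    using N_level[OF \<open>z \<in> N\<close>] by auto
  note time = similarity_time_term[OF u_def \<open>A \<noteq> 0\<close> \<open>z > 0\<close> \<open>Q + c * t > 0\<close> level C_def]
  note space = similarity_flux_eq(1)[OF u_def \<open>A \<noteq> 0\<close> \<open>z > 0\<close> level]
  have flux: "((\<lambda>y. K (u y t) * y powr \<nu> * deriv (\<lambda>y'. u y' t) y) has_real_derivative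
      -2 * (Q + c * t) powr A * ((\<nu> - 2 * A - 1) * z powr (\<nu> - 2 * A - 2))) (at z)"
    by (rule similarity_flux_has_derivative[OF u_def \<open>A \<noteq> 0\<close> \<open>open N\<close> \<open>z \<in> N\<close> N_level])
  have "C (u z t) * deriv (\<lambda>s. u z s) t = D * c * z powr (-2 * A - 2) * (Q + c * t) powr A"
    by (fact time(2))
  also have "\<dots> = -2 * (\<nu> - 2 * A - 1) * (Q + c * t) powr A * z powr (-\<nu> + (\<nu> - 2 * A - 2))"
    by (simp add: Dc)
  also have "\<dots> = z powr (-\<nu>) * deriv (\<lambda>y. K (u y t) * y powr \<nu> * deriv (\<lambda>y'. u y' t) y) z"
    unfolding DERIV_imp_deriv[OF flux] powr_add by (simp only: mult_ac)
  finally show ?thesis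
    unfolding real_differentiable_def using time(1) space flux by blast
qed

end

theorem mainTheorem7:
  fixes \<nu> A B D Q :: real
    and K J C :: "real \<Rightarrow> real"
    and u :: "real \<Rightarrow> real \<Rightarrow> real"
    and S :: "(real \<times> real) set"
  assumes nu_pos: "\<nu> > 0"
    and K_smooth: "smooth_fun K"
    and K_pos: "\<forall>x. K x > 0"
    and J_antideriv: "\<forall>x. (J has_real_derivative K x) (at x)"
    and J_inj: "inj J"
    and A_nz: "A \<noteq> 0"
    and D_nz: "D \<noteq> 0"
    and C_def: "\<forall>x. C x = D * K x * (A * J x + B) powr (1 / A)"
    and S_open: "open S"
    and S_pos: "\<forall>(z, t) \<in> S. z > 0 \<and> t > 0"
    and S_cond: "\<forall>(z, t) \<in> S. Q + 2 * (2 * A + 1 - \<nu>) / D * t > 0"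
    and S_range: "\<forall>(z, t) \<in> S.
        1 / A * z powr (-2 * A) * (Q + 2 * (2 * A + 1 - \<nu>) / D * t) powr A - B / A \<in> range J"
    and u_def: "\<forall>z t. u z t = inv J
        (1 / A * z powr (-2 * A) * (Q + 2 * (2 * A + 1 - \<nu>) / D * t) powr A - B / A)"
  shows "\<forall>(z, t) \<in> S.
      (\<lambda>s. u z s) differentiable (at t) \<and>
      (\<lambda>y. u y t) differentiable (at z) \<and>
      (\<lambda>y. K (u y t) * y powr \<nu> * deriv (\<lambda>y'. u y' t) y) differentiable (at z) \<and>
      C (u z t) * deriv (\<lambda>s. u z s) t =
        z powr (-\<nu>) * deriv (\<lambda>y. K (u y t) * y powr \<nu> * deriv (\<lambda>y'. u y' t) y) z"
proof clarify
  interpret invertible_antiderivative J K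
    using J_antideriv K_pos J_inj by unfold_locales (auto simp: less_imp_neq[symmetric])
  fix z t assume zt: "(z, t) \<in> S"
  define c where "c = 2 * (2 * A + 1 - \<nu>) / D"
  have u_eq: "\<And>z t. u z t = inv J (similarity_level A B Q c z t)"
    using u_def by (simp add: similarity_level_def c_def)
  define N where "N = (\<lambda>y. (y, t)) -` S"
  have "open N"
    unfolding N_def by (rule open_vimage[OF S_open]) (intro continuous_intros)
  moreover have "z \<in> N" using zt by (simp add: N_def)
  moreover have "y > 0 \<and> similarity_level A B Q c y t \<in> range J" if "y \<in> N" for y
    using that S_pos S_range by (auto simp: N_def similarity_level_def c_def)
  moreover have "Q + c * t > 0" using zt S_cond by (auto simp: c_def)
  moreover have "D * c = 2 * (2 * A + 1 - \<nu>)" using D_nz by (simp add: c_def)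
  ultimately show "(\<lambda>s. u z s) differentiable (at t) \<and> (\<lambda>y. u y t) differentiable (at z) \<and>
      (\<lambda>y. K (u y t) * y powr \<nu> * deriv (\<lambda>y'. u y' t) y) differentiable (at z) \<and>
      C (u z t) * deriv (\<lambda>s. u z s) t =
        z powr (-\<nu>) * deriv (\<lambda>y. K (u y t) * y powr \<nu> * deriv (\<lambda>y'. u y' t) y) z"
    using C_def by (intro similarity_solution[OF u_eq A_nz]) auto
qed

end
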